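(* Let $f=l+r\colon\mathbb{R}^d\to\mathbb{R}\cup\{+\infty\}$ be $\rho$-weakly convex and let $\{f_x=l_x+r\}_{x\in\mathbb{R}^d}$ be a one-sided model family with $\tau=0$ and Lipschitz constant $L$. Let $0<\mu<\rho^{-1}$, fix $a,b>0$, $x_0\in\mathbb{R}^d$, $\theta_k=\frac{\mu^{-1}-\rho}{2}(k+1)$, and define for $k=0,1,\dots,K$ $$x_{k+1}=\operatorname{argmin}_{x\in\mathbb{R}^d}\Big\{f_{x_k}(x)+\frac{1+\theta_k\mu}{2\mu}\Big\|x-\frac{x_0+\theta_k\mu x_k}{1+\theta_k\mu}\Big\|^2\Big\},\qquad \bar x_K=\frac{2}{(K+2)(K+3)-2}\sum_{k=1}^{K+1}(k+1)x_k.$$ If $K\ge\frac4a+\frac{16L^2}{(1-\mu\rho)^2b^2}$, then $$\|\bar x_K-\mathrm{prox}_{\mu f}(x_0)\|\le a\|x_0-\mathrm{prox}_{\mu f}(x_0)\|+\mu b.$$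
   Context: One-sided model family: $f=l+r$ with $r\colon\mathbb{R}^d\to\mathbb{R}\cup\{+\infty\}$ closed and $l\colon\mathbb{R}^d\to\mathbb{R}$ locally Lipschitz; for each $x\in\mathbb{R}^d$ a function $l_x\colon\mathbb{R}^d\to\mathbb{R}$ is given which is $L$-Lipschitz on $\mathrm{dom}\,r$, satisfies $l_x(x)=l(x)$ and $l_x(y)-l(y)\le\tau\|y-x\|^2$ for all $y$, and such that $f_x:=l_x+r$ is $\rho$-weakly convex (i.e. $f_x+\frac\rho2\|\cdot\|^2$ is convex). $\mathrm{prox}_{\mu f}(x)=\operatorname{argmin}_y\{f(y)+\frac1{2\mu}\|y-x\|^2\}$. *)

theory Defs
  imports "HOL-Analysis.Analysis" "HOL-Library.Extended_Real"
begin

text \<open>Extended-real-valued functions R^d -> R \<union> {+\<infinity>} are modelled as maps into ereal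
  that never take the value -\<infinity>.\<close>

definition ext_valued :: "('a \<Rightarrow> ereal) \<Rightarrow> bool" where
  "ext_valued g \<longleftrightarrow> (\<forall>x. g x \<noteq> -\<infinity>)"

definition edom :: "('a \<Rightarrow> ereal) \<Rightarrow> 'a set" where
  "edom g = {x. g x < \<infinity>}"

definition closed_fun :: "('a::topological_space \<Rightarrow> ereal) \<Rightarrow> bool" where
  "closed_fun g \<longleftrightarrow> closed {(x, t::real). g x \<le> ereal t}"

definition econvex :: "('a::real_vector \<Rightarrow> ereal) \<Rightarrow> bool" where
  "econvex g \<longleftrightarrow> (\<forall>x y. \<forall>t::real. 0 \<le> t \<and> t \<le> 1 \<longrightarrow>
      g (t *\<^sub>R x + (1 - t) *\<^sub>R y) \<le> ereal t * g x + ereal (1 - t) * g y)"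

definition weakly_convex :: "real \<Rightarrow> ('a::real_normed_vector \<Rightarrow> ereal) \<Rightarrow> bool" where
  "weakly_convex \<rho> g \<longleftrightarrow> econvex (\<lambda>x. g x + ereal (\<rho> / 2 * (norm x)\<^sup>2))"

definition locally_lipschitz :: "('a::metric_space \<Rightarrow> real) \<Rightarrow> bool" where
  "locally_lipschitz g \<longleftrightarrow> (\<forall>x. \<exists>e>0. \<exists>C. C-lipschitz_on (ball x e) g)"

definition one_sided_model_family ::
  "('a::real_normed_vector \<Rightarrow> real) \<Rightarrow> ('a \<Rightarrow> ereal) \<Rightarrow> ('a \<Rightarrow> 'a \<Rightarrow> real)
     \<Rightarrow> real \<Rightarrow> real \<Rightarrow> real \<Rightarrow> bool" where
  "one_sided_model_family l r lx L \<tau> \<rho> \<longleftrightarrow>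
     ext_valued r \<and> closed_fun r \<and> locally_lipschitz l \<and>
     (\<forall>x. L-lipschitz_on (edom r) (lx x)) \<and>
     (\<forall>x. lx x x = l x) \<and>
     (\<forall>x y. lx x y - l y \<le> \<tau> * (norm (y - x))\<^sup>2) \<and>
     (\<forall>x. weakly_convex \<rho> (\<lambda>y. ereal (lx x y) + r y))"

end

theory Submission
  imports Defs
begin

text \<open>Both p = prox(\<mu> f)(x0) and every iterate minimise a \<rho>-weakly convex function plus a
  quadratic of curvature above \<rho>, so each satisfies a three-point inequality. Adding the two and
  bounding the model error with the Lipschitz constant, Young's inequality yields
  (k + 5) D(k+1)^2 \<le> (k + 1) D(k)^2 + E / (k + 1) for D(k) = \<parallel>x_k - p\<parallel> and
  E = 16 L^2 / (1/\<mu> - \<rho>)^2, so D(k)^2 decays like D(0)^2 / k^3 + E / k. The (k+1)-weighted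
  average of the iterates inherits the bound by convexity of the squared norm.\<close>

lemma norm_convex_combination_sq:
  fixes a b :: "'a::real_inner"
  shows "(norm (t *\<^sub>R a + (1 - t) *\<^sub>R b))\<^sup>2
       = t * (norm a)\<^sup>2 + (1 - t) * (norm b)\<^sup>2 - t * (1 - t) * (norm (a - b))\<^sup>2"
  by (simp add: power2_norm_eq_inner inner_add_left inner_add_right inner_diff_left
      inner_diff_right inner_commute algebra_simps)

lemma convex_on_norm_sq: "convex_on UNIV (\<lambda>x::'a::real_inner. (norm x)\<^sup>2)"
proof (rule convex_onI)
  fix t :: real and x y :: 'a
  assume "0 < t" "t < 1"
  then show "(norm ((1 - t) *\<^sub>R x + t *\<^sub>R y))\<^sup>2 \<le> (1 - t) * (norm x)\<^sup>2 + t * (norm y)\<^sup>2"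
    using norm_convex_combination_sq[of "1 - t" x y] by simp
qed simp

lemma norm_sq_weighted_mean_le:
  fixes v :: "'i \<Rightarrow> 'a::real_inner"
  assumes w: "\<And>j. j \<in> I \<Longrightarrow> 0 \<le> w j" and S: "0 < sum w I"
  shows "(norm (inverse (sum w I) *\<^sub>R (\<Sum>j\<in>I. w j *\<^sub>R v j)))\<^sup>2
       \<le> inverse (sum w I) * (\<Sum>j\<in>I. w j * (norm (v j))\<^sup>2)"
proof -
  have I: "finite I" "I \<noteq> {}" using S by (auto intro: ccontr)
  have "(norm (\<Sum>j\<in>I. (w j / sum w I) *\<^sub>R v j))\<^sup>2 \<le> (\<Sum>j\<in>I. w j / sum w I * (norm (v j))\<^sup>2)"
    by (rule convex_on_sum[OF I convex_on_norm_sq])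
       (use w S in \<open>auto simp: sum_divide_distrib[symmetric]\<close>)
  then show ?thesis
    by (simp add: scaleR_sum_right sum_distrib_left divide_inverse_commute mult.assoc)
qed

lemma norm_sq_diff_weighted_mean:
  fixes x0 x y :: "'a::real_inner"
  assumes s: "1 + s \<noteq> 0"
  shows "(1 + s) * (norm (y - inverse (1 + s) *\<^sub>R (x0 + s *\<^sub>R x)))\<^sup>2
       = (norm (y - x0))\<^sup>2 + s * (norm (y - x))\<^sup>2 - s / (1 + s) * (norm (x - x0))\<^sup>2"
proof -
  define v where "v = (y - x0) + s *\<^sub>R (y - x)"
  have "v = (1 + s) *\<^sub>R y - (x0 + s *\<^sub>R x)"
    unfolding v_def by (simp add: algebra_simps)
  then have "y - inverse (1 + s) *\<^sub>R (x0 + s *\<^sub>R x) = inverse (1 + s) *\<^sub>R v"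
    using s by (simp add: scaleR_right_diff_distrib)
  then have "(1 + s) * (norm (y - inverse (1 + s) *\<^sub>R (x0 + s *\<^sub>R x)))\<^sup>2
      = inverse (1 + s) * (norm v)\<^sup>2"
    using s by (simp add: power_mult_distrib power2_eq_square flip: abs_inverse)
  also have "(norm v)\<^sup>2
      = (1 + s) * ((norm (y - x0))\<^sup>2 + s * (norm (y - x))\<^sup>2) - s * (norm (x - x0))\<^sup>2"
    unfolding v_def
    by (simp add: power2_norm_eq_inner inner_add_left inner_add_right inner_diff_left
        inner_diff_right inner_commute algebra_simps)
  finally show ?thesis
    using s by (simp add: field_simps)
qed

lemma weakly_convex_combination_le:
  fixes h :: "'a::real_inner \<Rightarrow> ereal"
  assumes wc: "weakly_convex \<rho> h" and hy: "h y = ereal Hy" and hu: "h u = ereal Hu"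
    and t: "0 \<le> t" "t \<le> 1"
  shows "h (t *\<^sub>R y + (1 - t) *\<^sub>R u)
       \<le> ereal (t * Hy + (1 - t) * Hu + \<rho> / 2 * t * (1 - t) * (norm (y - u))\<^sup>2)"
proof -
  define w where "w = t *\<^sub>R y + (1 - t) *\<^sub>R u"
  have "h w + ereal (\<rho> / 2 * (norm w)\<^sup>2)
      \<le> ereal t * (h y + ereal (\<rho> / 2 * (norm y)\<^sup>2)) + ereal (1 - t) * (h u + ereal (\<rho> / 2 * (norm u)\<^sup>2))"
    using wc t unfolding weakly_convex_def econvex_def w_def by blast
  also have "\<dots> = ereal (t * Hy + (1 - t) * Hu + \<rho> / 2 * (norm w)\<^sup>2
                        + \<rho> / 2 * t * (1 - t) * (norm (y - u))\<^sup>2)"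
    unfolding w_def norm_convex_combination_sq by (simp add: hy hu) (simp add: field_simps)
  finally show ?thesis
    unfolding w_def[symmetric] by (cases "h w") (auto simp: algebra_simps)
qed

lemma le_of_forall_le_minus_scaled:
  fixes A B C :: real
  assumes "\<And>t. 0 < t \<Longrightarrow> t < 1 \<Longrightarrow> A \<le> B - (1 - t) * C"
  shows "A \<le> B - C"
proof (rule tendsto_lowerbound)
  show "((\<lambda>t. B - (1 - t) * C) \<longlongrightarrow> B - C) (at_right 0)"
    by (auto intro!: tendsto_eq_intros)
  show "\<forall>\<^sub>F t in at_right 0. A \<le> B - (1 - t) * C"
    unfolding eventually_at_right_field using assms by (auto intro!: exI[of _ 1])
qed simp

lemma three_point_weakly_convex:
  fixes h :: "'a::real_inner \<Rightarrow> ereal"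
  assumes wc: "weakly_convex \<rho> h"
    and min: "is_arg_min (\<lambda>y. h y + ereal (\<beta> * (norm (y - z))\<^sup>2)) (\<lambda>_. True) u"
    and hu: "h u = ereal Hu" and hy: "h y = ereal Hy"
  shows "Hu + \<beta> * (norm (u - z))\<^sup>2 + (\<beta> - \<rho> / 2) * (norm (y - u))\<^sup>2 \<le> Hy + \<beta> * (norm (y - z))\<^sup>2"
proof -
  have "Hu + \<beta> * (norm (u - z))\<^sup>2
      \<le> Hy + \<beta> * (norm (y - z))\<^sup>2 - (1 - t) * ((\<beta> - \<rho> / 2) * (norm (y - u))\<^sup>2)"
    if t: "0 < t" "t < 1" for t
  proof -
    define w where "w = t *\<^sub>R y + (1 - t) *\<^sub>R u"
    have hw_le: "h w \<le> ereal (t * Hy + (1 - t) * Hu + \<rho> / 2 * t * (1 - t) * (norm (y - u))\<^sup>2)"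
      unfolding w_def using weakly_convex_combination_le[OF wc hy hu] t by simp
    have u_le_w: "\<not> h w + ereal (\<beta> * (norm (w - z))\<^sup>2) < ereal Hu + ereal (\<beta> * (norm (u - z))\<^sup>2)"
      using min hu unfolding is_arg_min_def by metis
    obtain Hw where hw: "h w = ereal Hw"
      using hw_le u_le_w by (cases "h w") auto
    have Qw: "(norm (w - z))\<^sup>2 = t * (norm (y - z))\<^sup>2 + (1 - t) * (norm (u - z))\<^sup>2
                                    - t * (1 - t) * (norm (y - u))\<^sup>2"
      using norm_convex_combination_sq[of t "y - z" "u - z"] by (simp add: w_def algebra_simps)
    have "Hu + \<beta> * (norm (u - z))\<^sup>2 \<le> Hw + \<beta> * (norm (w - z))\<^sup>2"
      using u_le_w hw by simp
    also have "\<dots> \<le> t * (Hy + \<beta> * (norm (y - z))\<^sup>2) + (1 - t) * (Hu + \<beta> * (norm (u - z))\<^sup>2)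
                    - (\<beta> - \<rho> / 2) * t * (1 - t) * (norm (y - u))\<^sup>2"
      using hw_le hw unfolding Qw by (simp add: algebra_simps)
    finally have "t * (Hu + \<beta> * (norm (u - z))\<^sup>2)
        \<le> t * (Hy + \<beta> * (norm (y - z))\<^sup>2 - (1 - t) * ((\<beta> - \<rho> / 2) * (norm (y - u))\<^sup>2))"
      by (simp add: algebra_simps)
    then show ?thesis using t by simp
  qed
  then have "Hu + \<beta> * (norm (u - z))\<^sup>2 \<le> Hy + \<beta> * (norm (y - z))\<^sup>2 - (\<beta> - \<rho> / 2) * (norm (y - u))\<^sup>2"
    by (rule le_of_forall_le_minus_scaled)
  then show ?thesis by simp
qed

lemma is_arg_min_in_edom:
  assumes min: "is_arg_min (\<lambda>y. ereal (g y) + r y + ereal (q y)) (\<lambda>_. True) u"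
    and y: "y \<in> edom r"
  shows "u \<in> edom r"
proof (rule ccontr)
  assume "u \<notin> edom r"
  then have "ereal (g y) + r y + ereal (q y) < ereal (g u) + r u + ereal (q u)"
    using y by (cases "r y") (auto simp: edom_def)
  then show False using min unfolding is_arg_min_def by blast
qed

lemma young_quadratic:
  fixes c L x :: real
  assumes "0 < c"
  shows "2 * L * x \<le> c / 2 * x\<^sup>2 + 2 * L\<^sup>2 / c"
proof -
  have "0 \<le> c / 2 * (x - 2 * L / c)\<^sup>2" using assms by simp
  also have "\<dots> = c / 2 * x\<^sup>2 - 2 * L * x + 2 * L\<^sup>2 / c"
    using assms by (simp add: power2_eq_square field_simps)
  finally show ?thesis by simp
qed

lemma cubic_rate_step:
  fixes n A E :: real
  assumes n: "1 \<le> n" and A: "0 \<le> A" and E: "0 \<le> E"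
  shows "(n + 1) * (8 * A / ((n + 1) * (n + 2) * (n + 3)) + E / (2 * (n + 1))) + E / (n + 1)
       \<le> (n + 5) * (8 * A / ((n + 2) * (n + 3) * (n + 4)) + E / (2 * (n + 2)))"
proof -
  have "8 * A / ((n + 2) * (n + 3)) \<le> (n + 5) * (8 * A / ((n + 2) * (n + 3) * (n + 4)))"
    using n A by (simp add: divide_simps) (simp add: algebra_simps)
  moreover have "E / 2 + E / (n + 1) \<le> (n + 5) * (E / (2 * (n + 2)))"
    using n E by (simp add: divide_simps) (simp add: algebra_simps mult_left_mono)
  moreover have "(n + 1) * (8 * A / ((n + 1) * (n + 2) * (n + 3))) = 8 * A / ((n + 2) * (n + 3))"
    and "(n + 1) * (E / (2 * (n + 1))) = E / 2"
    using n by (simp, simp add: field_simps)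
  ultimately show ?thesis
    unfolding distrib_left by linarith
qed

lemma sum_inverse_consecutive_products:
  "(\<Sum>j = 1..n. 1 / ((real j + 2) * (real j + 3))) = 1 / 3 - 1 / (real n + 3)"
proof (induction n)
  case (Suc n)
  have "(\<Sum>j = 1..Suc n. 1 / ((real j + 2) * (real j + 3)))
      = (\<Sum>j = 1..n. 1 / ((real j + 2) * (real j + 3))) + 1 / ((real n + 3) * (real n + 4))"
    by (simp add: add.commute)
  also have "\<dots> = 1 / 3 - 1 / (real (Suc n) + 3)"
    unfolding Suc.IH by (simp add: divide_simps) (simp add: algebra_simps)
  finally show ?case .
qed simp

lemma sum_succ_weights: "(\<Sum>k = 1..K+1. real k + 1) = ((real K + 2) * (real K + 3) - 2) / 2"
  by (induction K) (simp_all add: field_simps)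

lemma averaged_rate_le_sq:
  fixes K D0 E a m :: real
  assumes K: "K \<ge> 4 / a + E / m\<^sup>2" and a: "0 < a" and m: "0 < m" and E: "0 \<le> E" and D0: "0 \<le> D0"
  shows "(8 / 3 * D0\<^sup>2 + (K + 1) * E / 2) / (((K + 2) * (K + 3) - 2) / 2) \<le> (a * D0 + m)\<^sup>2"
proof -
  have "0 < 4 / a" "0 \<le> E / m\<^sup>2" using a E by simp_all
  then have "4 / a \<le> K" "E / m\<^sup>2 \<le> K" and K0: "0 < K" using K by linarith+
  then have aK: "4 \<le> a * K" and EK: "E \<le> K * m\<^sup>2"
    using a m by (simp_all add: divide_le_eq mult.commute)
  have "16 / 3 \<le> (a * K)\<^sup>2"
    using power_mono[OF aK, of 2] by simp
  also have "\<dots> \<le> a\<^sup>2 * ((K + 1) * (K + 4))"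
    using K0 by (simp add: power2_eq_square algebra_simps)
  finally have "16 / 3 * D0\<^sup>2 \<le> a\<^sup>2 * ((K + 1) * (K + 4)) * D0\<^sup>2"
    by (rule mult_right_mono) simp
  then have "8 / 3 * D0\<^sup>2 / ((K + 1) * (K + 4) / 2) \<le> a\<^sup>2 * D0\<^sup>2"
    using K0 by (simp add: divide_simps) (simp add: algebra_simps)
  moreover have "(K + 1) * E / 2 / ((K + 1) * (K + 4) / 2) \<le> m\<^sup>2"
  proof -
    have "(K + 1) * E / 2 / ((K + 1) * (K + 4) / 2) = E / (K + 4)"
      using K0 by (simp add: divide_simps)
    also have "\<dots> \<le> E / K" using K0 E by (simp add: frac_le)
    also have "\<dots> \<le> m\<^sup>2" using EK K0 by (simp add: divide_le_eq mult.commute)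
    finally show ?thesis .
  qed
  ultimately have "(8 / 3 * D0\<^sup>2 + (K + 1) * E / 2) / ((K + 1) * (K + 4) / 2) \<le> a\<^sup>2 * D0\<^sup>2 + m\<^sup>2"
    by (simp add: add_divide_distrib)
  also have "\<dots> \<le> (a * D0 + m)\<^sup>2"
    using a m D0 by (simp add: power2_eq_square algebra_simps)
  finally show ?thesis
    by (simp add: algebra_simps)
qed

locale anchored_model_prox =
  fixes l :: "'a::real_inner \<Rightarrow> real" and r :: "'a \<Rightarrow> ereal" and lx :: "'a \<Rightarrow> 'a \<Rightarrow> real"
    and L \<rho> \<mu> :: real and x0 p :: 'a and xs :: "nat \<Rightarrow> 'a" and K :: nat
  assumes proper: "edom r \<noteq> {}"
    and wc: "weakly_convex \<rho> (\<lambda>y. ereal (l y) + r y)"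
    and model: "one_sided_model_family l r lx L 0 \<rho>"
    and rho: "0 < \<rho>" and mu: "0 < \<mu>" "\<mu> < inverse \<rho>"
    and x_0: "xs 0 = x0"
    and iter: "\<And>k. k \<le> K \<Longrightarrow>
       is_arg_min
         (\<lambda>y. ereal (lx (xs k) y) + r y
               + ereal ((1 + (((inverse \<mu> - \<rho>) / 2) * (real k + 1)) * \<mu>) / (2 * \<mu>)
                  * (norm (y - inverse (1 + (((inverse \<mu> - \<rho>) / 2) * (real k + 1)) * \<mu>)
                      *\<^sub>R (x0 + ((((inverse \<mu> - \<rho>) / 2) * (real k + 1)) * \<mu>) *\<^sub>R xs k)))\<^sup>2))
         (\<lambda>_. True) (xs (Suc k))"
    and prox: "is_arg_min (\<lambda>y. ereal (l y) + r y + ereal (1 / (2 * \<mu>) * (norm (y - x0))\<^sup>2))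
                 (\<lambda>_. True) p"
begin

definition \<alpha> :: real where "\<alpha> = inverse \<mu> - \<rho>"
abbreviation \<theta> :: "nat \<Rightarrow> real" where "\<theta> k \<equiv> \<alpha> / 2 * (real k + 1)"
abbreviation q :: "'a \<Rightarrow> real" where "q y \<equiv> 1 / (2 * \<mu>) * (norm (y - x0))\<^sup>2"
abbreviation rv :: "'a \<Rightarrow> real" where "rv y \<equiv> real_of_ereal (r y)"
abbreviation D :: "nat \<Rightarrow> real" where "D j \<equiv> norm (xs j - p)"
definition E :: real where "E = 16 * L\<^sup>2 / \<alpha>\<^sup>2"

lemma alpha_pos: "0 < \<alpha>"
  using mu rho unfolding \<alpha>_def by (simp add: field_simps)

lemma mu_alpha: "\<mu> * \<alpha> = 1 - \<mu> * \<rho>"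
  using mu unfolding \<alpha>_def by (simp add: field_simps)

lemma E_nonneg: "0 \<le> E"
  unfolding E_def by simp

lemma lx_le_l: "lx x y \<le> l y"
  using model unfolding one_sided_model_family_def by force

lemma lx_diag: "lx x x = l x"
  using model unfolding one_sided_model_family_def by blast

lemma lx_lipschitz:
  assumes "c \<in> edom r" "d \<in> edom r"
  shows "lx x c - lx x d \<le> L * norm (c - d)"
proof -
  have "L-lipschitz_on (edom r) (lx x)"
    using model unfolding one_sided_model_family_def by blast
  then have "norm (lx x c - lx x d) \<le> L * norm (c - d)"
    using assms by (rule lipschitz_on_normD)
  then show ?thesis by simp
qed

lemma model_weakly_convex: "weakly_convex \<rho> (\<lambda>y. ereal (lx x y) + r y)"
  using model unfolding one_sided_model_family_def by blast

lemma l_lipschitz: "c \<in> edom r \<Longrightarrow> d \<in> edom r \<Longrightarrow> l c - l d \<le> L * norm (c - d)"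
  using lx_lipschitz[of c d c] lx_diag[of c] lx_le_l[of c d] by linarith

lemma plus_r_real: "y \<in> edom r \<Longrightarrow> ereal c + r y = ereal (c + rv y)"
  using model unfolding one_sided_model_family_def ext_valued_def edom_def
  by (cases "r y") auto

lemma prox_in_edom: "p \<in> edom r"
  using proper is_arg_min_in_edom[OF prox] by blast

lemma iterate_in_edom: "k \<le> K \<Longrightarrow> xs (Suc k) \<in> edom r"
  using proper is_arg_min_in_edom[OF iter] by blast

lemma prox_three_point:
  assumes y: "y \<in> edom r"
  shows "l p + rv p + q p + \<alpha> / 2 * (norm (y - p))\<^sup>2 \<le> l y + rv y + q y"
proof -
  have "l p + rv p + q p + (1 / (2 * \<mu>) - \<rho> / 2) * (norm (y - p))\<^sup>2 \<le> l y + rv y + q y"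
    by (rule three_point_weakly_convex[OF wc prox])
       (simp_all add: plus_r_real prox_in_edom y)
  moreover have "1 / (2 * \<mu>) - \<rho> / 2 = \<alpha> / 2"
    using mu unfolding \<alpha>_def by (simp add: field_simps)
  ultimately show ?thesis by simp
qed

lemma iterate_three_point:
  assumes k: "k \<le> K"
  shows "lx (xs k) (xs (Suc k)) + rv (xs (Suc k)) + q (xs (Suc k))
           + \<theta> k / 2 * (norm (xs (Suc k) - xs k))\<^sup>2 + (\<alpha> + \<theta> k) / 2 * (D (Suc k))\<^sup>2
         \<le> lx (xs k) p + rv p + q p + \<theta> k / 2 * (D k)\<^sup>2"
proof -
  let ?s = "\<theta> k * \<mu>"
  let ?z = "inverse (1 + ?s) *\<^sub>R (x0 + ?s *\<^sub>R xs k)"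
  have s: "0 < 1 + ?s" using alpha_pos mu by (simp add: add_pos_nonneg)
  have quad: "(1 + ?s) / (2 * \<mu>) * (norm (y - ?z))\<^sup>2
      = q y + \<theta> k / 2 * (norm (y - xs k))\<^sup>2 - 1 / (2 * \<mu>) * (?s / (1 + ?s) * (norm (xs k - x0))\<^sup>2)"
    for y
  proof -
    have "(1 + ?s) / (2 * \<mu>) * (norm (y - ?z))\<^sup>2 = 1 / (2 * \<mu>) * ((1 + ?s) * (norm (y - ?z))\<^sup>2)"
      by simp
    also have "\<dots> = 1 / (2 * \<mu>) * ((norm (y - x0))\<^sup>2 + ?s * (norm (y - xs k))\<^sup>2
                                    - ?s / (1 + ?s) * (norm (xs k - x0))\<^sup>2)"
      using s by (simp only: norm_sq_diff_weighted_mean)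
    finally show ?thesis
      using mu by (simp add: right_diff_distrib distrib_left)
  qed
  have three_point: "lx (xs k) (xs (Suc k)) + rv (xs (Suc k)) + (1 + ?s) / (2 * \<mu>) * (norm (xs (Suc k) - ?z))\<^sup>2
          + ((1 + ?s) / (2 * \<mu>) - \<rho> / 2) * (norm (p - xs (Suc k)))\<^sup>2
        \<le> lx (xs k) p + rv p + (1 + ?s) / (2 * \<mu>) * (norm (p - ?z))\<^sup>2"
    by (rule three_point_weakly_convex[OF model_weakly_convex iter[OF k, folded \<alpha>_def]])
       (simp_all add: plus_r_real prox_in_edom iterate_in_edom[OF k])
  have coeff: "(1 + ?s) / (2 * \<mu>) - \<rho> / 2 = (\<alpha> + \<theta> k) / 2"
    using mu unfolding \<alpha>_def by (simp add: field_simps)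
  from three_point show ?thesis
    unfolding quad coeff by (simp add: norm_minus_commute)
qed

lemma one_step_descent:
  assumes k: "k \<le> K"
  shows "(2 * \<alpha> + \<theta> k) / 2 * (D (Suc k))\<^sup>2 + \<theta> k / 2 * (norm (xs (Suc k) - xs k))\<^sup>2
       \<le> \<theta> k / 2 * (D k)\<^sup>2 + (l (xs (Suc k)) - l p) + (lx (xs k) p - lx (xs k) (xs (Suc k)))"
proof -
  have "(2 * \<alpha> + \<theta> k) / 2 * (D (Suc k))\<^sup>2 = (\<alpha> + \<theta> k) / 2 * (D (Suc k))\<^sup>2 + \<alpha> / 2 * (D (Suc k))\<^sup>2"
    by (simp add: field_simps)
  then show ?thesis
    using iterate_three_point[OF k] prox_three_point[OF iterate_in_edom[OF k]] by linarith
qed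

lemma dist_recursion:
  assumes k: "1 \<le> k" "k \<le> K"
  shows "(real k + 5) * (D (Suc k))\<^sup>2 \<le> (real k + 1) * (D k)\<^sup>2 + E / (real k + 1)"
proof -
  let ?\<Delta> = "norm (xs (Suc k) - xs k)"
  have xk: "xs k \<in> edom r" using iterate_in_edom[of "k - 1"] k by simp
  have "l (xs (Suc k)) - l p + (lx (xs k) p - lx (xs k) (xs (Suc k))) \<le> 2 * L * ?\<Delta>"
    using lx_le_l[of "xs k" p] lx_diag[of "xs k"] l_lipschitz[OF iterate_in_edom[OF k(2)] xk]
      lx_lipschitz[OF xk iterate_in_edom[OF k(2)], of "xs k"]
    by (simp add: norm_minus_commute)
  also have "\<dots> \<le> \<theta> k / 2 * ?\<Delta>\<^sup>2 + 2 * L\<^sup>2 / \<theta> k"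
    using alpha_pos by (intro young_quadratic) simp
  finally have descent: "(2 * \<alpha> + \<theta> k) / 2 * (D (Suc k))\<^sup>2 \<le> \<theta> k / 2 * (D k)\<^sup>2 + 2 * L\<^sup>2 / \<theta> k"
    using one_step_descent[OF k(2)] by linarith
  have "(real k + 5) * (D (Suc k))\<^sup>2 = 4 / \<alpha> * ((2 * \<alpha> + \<theta> k) / 2 * (D (Suc k))\<^sup>2)"
    using alpha_pos by (simp add: field_simps)
  also have "\<dots> \<le> 4 / \<alpha> * (\<theta> k / 2 * (D k)\<^sup>2 + 2 * L\<^sup>2 / \<theta> k)"
    using descent alpha_pos by (intro mult_left_mono) auto
  also have "\<dots> = (real k + 1) * (D k)\<^sup>2 + E / (real k + 1)"
  proof -
    have "4 / \<alpha> * (\<theta> k / 2 * (D k)\<^sup>2) = (real k + 1) * (D k)\<^sup>2"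
      using alpha_pos by simp
    moreover have "4 / \<alpha> * (2 * L\<^sup>2 / \<theta> k) = E / (real k + 1)"
      using alpha_pos unfolding E_def by (simp add: power2_eq_square divide_simps)
    ultimately show ?thesis by (simp only: distrib_left)
  qed
  finally show ?thesis .
qed

text \<open>The anchor x0 need not lie in dom r, so the model error of the first step is bounded
  through p instead of x0.\<close>

lemma dist_first_step: "(D 1)\<^sup>2 \<le> (D 0)\<^sup>2 / 3 + E / 6"
proof -
  have x1: "xs 1 \<in> edom r" using iterate_in_edom[of 0] by simp
  have "l (xs 1) - l p + (lx (xs 0) p - lx (xs 0) (xs 1)) \<le> 2 * L * D 1"
    using l_lipschitz[OF x1 prox_in_edom] lx_lipschitz[OF prox_in_edom x1, of "xs 0"]
    by (simp add: norm_minus_commute)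
  also have "\<dots> \<le> \<alpha> / 2 * (D 1)\<^sup>2 + 2 * L\<^sup>2 / \<alpha>"
    using alpha_pos by (rule young_quadratic)
  moreover have "0 \<le> \<theta> 0 / 2 * (norm (xs 1 - xs 0))\<^sup>2" using alpha_pos by simp
  ultimately have descent:
    "(2 * \<alpha> + \<theta> 0) / 2 * (D 1)\<^sup>2 \<le> \<theta> 0 / 2 * (D 0)\<^sup>2 + \<alpha> / 2 * (D 1)\<^sup>2 + 2 * L\<^sup>2 / \<alpha>"
    using one_step_descent[of 0] unfolding One_nat_def by linarith
  have "(D 1)\<^sup>2 = 4 / (3 * \<alpha>) * ((2 * \<alpha> + \<theta> 0) / 2 * (D 1)\<^sup>2 - \<alpha> / 2 * (D 1)\<^sup>2)"
    using alpha_pos by (simp add: field_simps)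
  also have "\<dots> \<le> 4 / (3 * \<alpha>) * (\<theta> 0 / 2 * (D 0)\<^sup>2 + 2 * L\<^sup>2 / \<alpha>)"
    using descent alpha_pos by (intro mult_left_mono) auto
  also have "\<dots> = (D 0)\<^sup>2 / 3 + E / 6"
    using alpha_pos unfolding E_def by (simp add: field_simps power2_eq_square)
  finally show ?thesis .
qed

lemma dist_sq_bound:
  assumes "1 \<le> j" "j \<le> K + 1"
  shows "(D j)\<^sup>2 \<le> 8 * (D 0)\<^sup>2 / ((real j + 1) * (real j + 2) * (real j + 3)) + E / (2 * (real j + 1))"
  using assms
proof (induction j rule: nat_induct_at_least)
  case base
  have "(D 1)\<^sup>2 \<le> (D 0)\<^sup>2 / 3 + E / 4"
    using dist_first_step E_nonneg by linarith
  then show ?case by simp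
next
  case (Suc n)
  have "(real n + 5) * (D (Suc n))\<^sup>2 \<le> (real n + 1) * (D n)\<^sup>2 + E / (real n + 1)"
    using dist_recursion Suc by simp
  also have "\<dots> \<le> (real n + 1) * (8 * (D 0)\<^sup>2 / ((real n + 1) * (real n + 2) * (real n + 3))
                                + E / (2 * (real n + 1))) + E / (real n + 1)"
    using Suc by (intro add_right_mono mult_left_mono) simp_all
  also have "\<dots> \<le> (real n + 5) * (8 * (D 0)\<^sup>2 / ((real n + 2) * (real n + 3) * (real n + 4))
                                + E / (2 * (real n + 2)))"
    using Suc E_nonneg by (intro cubic_rate_step) simp_all
  finally show ?case
    by (simp add: add.commute add.left_commute)
qed

lemma weighted_dist_sq_sum_le:
  "(\<Sum>j = 1..K+1. (real j + 1) * (D j)\<^sup>2) \<le> 8 / 3 * (D 0)\<^sup>2 + (real K + 1) * E / 2"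
proof -
  define I where "I = {1..K+1}"
  have "(\<Sum>j\<in>I. (real j + 1) * (D j)\<^sup>2) \<le> (\<Sum>j\<in>I. 8 * (D 0)\<^sup>2 * (1 / ((real j + 2) * (real j + 3))) + E / 2)"
  proof (rule sum_mono)
    fix j assume "j \<in> I"
    then have "(real j + 1) * (D j)\<^sup>2
        \<le> (real j + 1) * (8 * (D 0)\<^sup>2 / ((real j + 1) * (real j + 2) * (real j + 3)) + E / (2 * (real j + 1)))"
      unfolding I_def using dist_sq_bound by (intro mult_left_mono) simp_all
    moreover have "(real j + 1) * (8 * (D 0)\<^sup>2 / ((real j + 1) * (real j + 2) * (real j + 3)))
        = 8 * (D 0)\<^sup>2 * (1 / ((real j + 2) * (real j + 3)))"
      and "(real j + 1) * (E / (2 * (real j + 1))) = E / 2"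
      by (simp, simp add: field_simps)
    ultimately show "(real j + 1) * (D j)\<^sup>2 \<le> 8 * (D 0)\<^sup>2 * (1 / ((real j + 2) * (real j + 3))) + E / 2"
      by (simp only: distrib_left)
  qed
  also have "\<dots> = 8 * (D 0)\<^sup>2 * (1 / 3 - 1 / (real (K + 1) + 3)) + (real K + 1) * E / 2"
  proof -
    have "(\<Sum>j\<in>I. 8 * (D 0)\<^sup>2 * (1 / ((real j + 2) * (real j + 3)))) = 8 * (D 0)\<^sup>2 * (1 / 3 - 1 / (real (K + 1) + 3))"
      unfolding I_def by (simp only: sum_distrib_left[symmetric] sum_inverse_consecutive_products)
    moreover have "(\<Sum>j\<in>I. E / 2) = (real K + 1) * E / 2"
      unfolding I_def by simp
    ultimately show ?thesis by (simp only: sum.distrib)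
  qed
  also have "\<dots> \<le> 8 / 3 * (D 0)\<^sup>2 + (real K + 1) * E / 2"
    by (simp add: algebra_simps)
  finally show ?thesis unfolding I_def .
qed

lemma averaged_dist_sq_le:
  "(norm ((2 / ((real K + 2) * (real K + 3) - 2)) *\<^sub>R (\<Sum>k = 1..K+1. (real k + 1) *\<^sub>R xs k) - p))\<^sup>2
     \<le> (8 / 3 * (D 0)\<^sup>2 + (real K + 1) * E / 2) / (((real K + 2) * (real K + 3) - 2) / 2)"
proof -
  define S where "S = (\<Sum>k = 1..K+1. real k + 1)"
  define T where "T = (\<Sum>k = 1..K+1. (real k + 1) *\<^sub>R xs k)"
  have S: "S = ((real K + 2) * (real K + 3) - 2) / 2"
    unfolding S_def by (rule sum_succ_weights)
  have S_pos: "0 < S"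
    unfolding S_def by (intro sum_pos) auto
  have centered: "(\<Sum>k = 1..K+1. (real k + 1) *\<^sub>R (xs k - p)) = T - S *\<^sub>R p"
    unfolding S_def T_def by (simp only: scaleR_right_diff_distrib sum_subtractf scaleR_sum_left)
  have "(2 / ((real K + 2) * (real K + 3) - 2)) *\<^sub>R T - p
      = inverse S *\<^sub>R (\<Sum>k = 1..K+1. (real k + 1) *\<^sub>R (xs k - p))"
  proof -
    have "2 / ((real K + 2) * (real K + 3) - 2) = inverse S" unfolding S by simp
    then show ?thesis unfolding centered using S_pos by (simp add: scaleR_right_diff_distrib)
  qed
  also have "(norm \<dots>)\<^sup>2 \<le> inverse S * (\<Sum>k = 1..K+1. (real k + 1) * (norm (xs k - p))\<^sup>2)"
    unfolding S_def
    by (rule norm_sq_weighted_mean_le[of _ _ "\<lambda>k. xs k - p"]) (use S_pos[unfolded S_def] in simp_all)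
  also have "\<dots> \<le> inverse S * (8 / 3 * (D 0)\<^sup>2 + (real K + 1) * E / 2)"
    using weighted_dist_sq_sum_le S_pos by (intro mult_left_mono) simp_all
  also have "\<dots> = (8 / 3 * (D 0)\<^sup>2 + (real K + 1) * E / 2) / S"
    by (rule divide_inverse_commute[symmetric])
  finally show ?thesis
    unfolding S T_def .
qed

end

theorem mainTheorem8:
  fixes l :: "'a::euclidean_space \<Rightarrow> real" and r :: "'a \<Rightarrow> ereal"
    and lx :: "'a \<Rightarrow> 'a \<Rightarrow> real"
    and L \<rho> \<mu> a b :: real and x0 p :: 'a and xs :: "nat \<Rightarrow> 'a" and K :: nat
  assumes proper: "edom r \<noteq> {}"
    and wc: "weakly_convex \<rho> (\<lambda>y. ereal (l y) + r y)"
    and model: "one_sided_model_family l r lx L 0 \<rho>"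
    and rho: "0 < \<rho>" and mu: "0 < \<mu>" "\<mu> < inverse \<rho>"
    and ab: "0 < a" "0 < b"
    and x_0: "xs 0 = x0"
    and iter: "\<And>k. k \<le> K \<Longrightarrow>
       is_arg_min
         (\<lambda>y. ereal (lx (xs k) y) + r y
               + ereal ((1 + (((inverse \<mu> - \<rho>) / 2) * (real k + 1)) * \<mu>) / (2 * \<mu>)
                  * (norm (y - inverse (1 + (((inverse \<mu> - \<rho>) / 2) * (real k + 1)) * \<mu>)
                      *\<^sub>R (x0 + ((((inverse \<mu> - \<rho>) / 2) * (real k + 1)) * \<mu>) *\<^sub>R xs k)))\<^sup>2))
         (\<lambda>_. True) (xs (Suc k))"
    and prox: "is_arg_min (\<lambda>y. ereal (l y) + r y + ereal (1 / (2 * \<mu>) * (norm (y - x0))\<^sup>2))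
                 (\<lambda>_. True) p"
    and K: "real K \<ge> 4 / a + 16 * L\<^sup>2 / ((1 - \<mu> * \<rho>)\<^sup>2 * b\<^sup>2)"
  shows "norm ((2 / ((real K + 2) * (real K + 3) - 2)) *\<^sub>R (\<Sum>k = 1..K+1. (real k + 1) *\<^sub>R xs k) - p)
           \<le> a * norm (x0 - p) + \<mu> * b"
proof -
  interpret anchored_model_prox l r lx L \<rho> \<mu> x0 p xs K
    using proper wc model rho mu x_0 iter prox by unfold_locales
  have "E / (\<mu> * b)\<^sup>2 = 16 * L\<^sup>2 / ((1 - \<mu> * \<rho>)\<^sup>2 * b\<^sup>2)"
    unfolding E_def mu_alpha[symmetric] by (simp add: power_mult_distrib field_simps)
  then have "(8 / 3 * (D 0)\<^sup>2 + (real K + 1) * E / 2) / (((real K + 2) * (real K + 3) - 2) / 2)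
      \<le> (a * D 0 + \<mu> * b)\<^sup>2"
    using K ab mu by (intro averaged_rate_le_sq) (simp_all add: E_nonneg)
  with averaged_dist_sq_le have "(norm ((2 / ((real K + 2) * (real K + 3) - 2)) *\<^sub>R
      (\<Sum>k = 1..K+1. (real k + 1) *\<^sub>R xs k) - p))\<^sup>2 \<le> (a * D 0 + \<mu> * b)\<^sup>2"
    by (rule order_trans)
  then show ?thesis
    using ab mu x_0 by (auto intro: power2_le_imp_le)
qed

end
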